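(* Let $G$ be a finite simple graph, $1\le k\le\operatorname{mat}(G)$, and let $M$ be a $k$-admissable matching of $G$ that is a perfect matching of $G$. Let $M=M_1\cup\dots\cup M_r$ be a $k$-admissable partition of $M$ for $G$. If $x$ is a vertex of some edge of $M_i$ and $y$ is a vertex of some edge of $M_j$ with $i\neq j$, then $x$ and $y$ lie in different connected components of $G$.
   Context: $\operatorname{mat}(G)$ is the matching number; a perfect matching covers every vertex. Two edges form a gap if they are disjoint and no edge of $G$ joins a vertex of one to a vertex of the other. A sequence $(a_1,\dots,a_n)$ of integers is $k$-admissable if $a_i\ge1$ and $\sum a_i\le n+k-1$. A $k$-admissable partition of a matching $M$ for $G$ is a decomposition $M=M_1\cup\dots\cup M_r$ into nonempty pairwise disjoint subsets such that edges from different $M_i$'s always form a gap in $G$, $(|M_1|,\dots,|M_r|)$ is $k$-admissable, and the induced subgraph of $G$ on $\bigcup_{e\in M_i}e$ is a forest for each $i$. $M$ is $k$-admissable if it has such a partition. *)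

theory Defs
  imports Main
begin

definition simple_graph :: "'a set \<Rightarrow> 'a set set \<Rightarrow> bool" where
  "simple_graph V E \<longleftrightarrow> finite V \<and> (\<forall>e\<in>E. e \<subseteq> V \<and> card e = 2)"

definition matching :: "'a set set \<Rightarrow> 'a set set \<Rightarrow> bool" where
  "matching E M \<longleftrightarrow> M \<subseteq> E \<and> (\<forall>e\<in>M. \<forall>f\<in>M. e \<noteq> f \<longrightarrow> e \<inter> f = {})"

definition perfect_matching :: "'a set \<Rightarrow> 'a set set \<Rightarrow> 'a set set \<Rightarrow> bool" where
  "perfect_matching V E M \<longleftrightarrow> matching E M \<and> \<Union>M = V"

definition mat :: "'a set set \<Rightarrow> nat" where
  "mat E = Max {card M | M. matching E M}"

definition gap :: "'a set set \<Rightarrow> 'a set \<Rightarrow> 'a set \<Rightarrow> bool" where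
  "gap E e f \<longleftrightarrow> e \<inter> f = {} \<and> (\<forall>x\<in>e. \<forall>y\<in>f. {x, y} \<notin> E)"

definition k_admissable_seq :: "nat \<Rightarrow> int list \<Rightarrow> bool" where
  "k_admissable_seq k as \<longleftrightarrow> (\<forall>a\<in>set as. a \<ge> 1) \<and>
      sum_list as \<le> int (length as) + int k - 1"

definition induced_edges :: "'a set set \<Rightarrow> 'a set \<Rightarrow> 'a set set" where
  "induced_edges E S = {e \<in> E. e \<subseteq> S}"

definition is_cycle :: "'a set set \<Rightarrow> 'a list \<Rightarrow> bool" where
  "is_cycle F vs \<longleftrightarrow> length vs \<ge> 3 \<and> distinct vs \<and>
      (\<forall>i < length vs. {vs ! i, vs ! ((i + 1) mod length vs)} \<in> F)"

definition forest :: "'a set set \<Rightarrow> bool" where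
  "forest F \<longleftrightarrow> \<not> (\<exists>vs. is_cycle F vs)"

definition k_admissable_partition ::
    "nat \<Rightarrow> 'a set set \<Rightarrow> 'a set set \<Rightarrow> 'a set set list \<Rightarrow> bool" where
  "k_admissable_partition k E M Ms \<longleftrightarrow>
     (\<forall>i < length Ms. Ms ! i \<noteq> {}) \<and>
     (\<forall>i < length Ms. \<forall>j < length Ms. i \<noteq> j \<longrightarrow> Ms ! i \<inter> Ms ! j = {}) \<and>
     \<Union>(set Ms) = M \<and>
     (\<forall>i < length Ms. \<forall>j < length Ms. i \<noteq> j \<longrightarrow>
        (\<forall>e \<in> Ms ! i. \<forall>f \<in> Ms ! j. gap E e f)) \<and>
     k_admissable_seq k (map (\<lambda>A. int (card A)) Ms) \<and>
     (\<forall>i < length Ms. forest (induced_edges E (\<Union>(Ms ! i))))"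

definition k_admissable_matching :: "nat \<Rightarrow> 'a set set \<Rightarrow> 'a set set \<Rightarrow> bool" where
  "k_admissable_matching k E M \<longleftrightarrow> matching E M \<and> (\<exists>Ms. k_admissable_partition k E M Ms)"

definition same_component :: "'a set set \<Rightarrow> 'a \<Rightarrow> 'a \<Rightarrow> bool" where
  "same_component E x y \<longleftrightarrow> (\<lambda>u v. {u, v} \<in> E)\<^sup>*\<^sup>* x y"

end

theory Submission
  imports Defs
begin

text \<open>Since the matching is perfect, every vertex is covered by some block of the partition.
  An edge of G from a vertex covered by one block to a vertex covered by another would contradict
  the gap condition, so the vertices covered by a block form a union of connected components;
  by the same condition, distinct blocks cover disjoint vertex sets.\<close>

lemma same_component_stays_in_closed_set:
  assumes "same_component E x y" and "x \<in> S"
    and closed: "\<And>u v. u \<in> S \<Longrightarrow> {u, v} \<in> E \<Longrightarrow> v \<in> S"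
  shows "y \<in> S"
proof -
  have "(\<lambda>u v. {u, v} \<in> E)\<^sup>*\<^sup>* x y"
    using assms(1) by (simp add: same_component_def)
  then show ?thesis
    by (induction rule: rtranclp_induct) (use \<open>x \<in> S\<close> closed in blast)+
qed

lemma admissable_partition_gap:
  assumes "k_admissable_partition k E M Ms"
    and "i < length Ms" "j < length Ms" "i \<noteq> j" "e \<in> Ms ! i" "f \<in> Ms ! j"
  shows "gap E e f"
  using assms by (simp add: k_admissable_partition_def)

lemma admissable_partition_blocks_disjoint:
  assumes "k_admissable_partition k E M Ms"
    and "i < length Ms" "j < length Ms" "i \<noteq> j"
  shows "\<Union>(Ms ! i) \<inter> \<Union>(Ms ! j) = {}"
  using admissable_partition_gap[OF assms] by (auto simp: gap_def)

lemma admissable_partition_covers: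
  assumes "k_admissable_partition k E M Ms" and "perfect_matching V E M" and "v \<in> V"
  obtains l where "l < length Ms" and "v \<in> \<Union>(Ms ! l)"
proof -
  have "v \<in> \<Union>(\<Union>(set Ms))"
    using assms by (simp add: k_admissable_partition_def perfect_matching_def)
  then obtain A where "A \<in> set Ms" and "v \<in> \<Union>A"
    by blast
  then show thesis
    using that by (metis in_set_conv_nth)
qed

lemma admissable_partition_block_closed:
  assumes partition: "k_admissable_partition k E M Ms" and "perfect_matching V E M"
    and "simple_graph V E" and "i < length Ms"
    and "u \<in> \<Union>(Ms ! i)" and edge: "{u, v} \<in> E"
  shows "v \<in> \<Union>(Ms ! i)"
proof -
  have "v \<in> V"
    using \<open>simple_graph V E\<close> edge by (auto simp: simple_graph_def)
  then obtain l where "l < length Ms" and v_in: "v \<in> \<Union>(Ms ! l)"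
    using admissable_partition_covers[OF partition \<open>perfect_matching V E M\<close>] by blast
  show ?thesis
  proof (rule ccontr)
    assume "v \<notin> \<Union>(Ms ! i)"
    then have "l \<noteq> i"
      using v_in by blast
    obtain e f where "e \<in> Ms ! i" "u \<in> e" "f \<in> Ms ! l" "v \<in> f"
      using \<open>u \<in> \<Union>(Ms ! i)\<close> v_in by blast
    moreover have "gap E e f"
      using admissable_partition_gap[OF partition \<open>i < length Ms\<close> \<open>l < length Ms\<close>]
        \<open>l \<noteq> i\<close> calculation by metis
    ultimately show False
      using edge by (auto simp: gap_def)
  qed
qed

theorem lemma5p8:
  fixes V :: "'a set" and E :: "'a set set" and M :: "'a set set"
    and Ms :: "'a set set list" and k i j :: nat and x y :: 'a
  assumes "simple_graph V E"
    and "1 \<le> k" and "k \<le> mat E"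
    and "k_admissable_matching k E M"
    and "perfect_matching V E M"
    and "k_admissable_partition k E M Ms"
    and "i < length Ms" and "j < length Ms" and "i \<noteq> j"
    and "e \<in> Ms ! i" and "x \<in> e"
    and "f \<in> Ms ! j" and "y \<in> f"
  shows "\<not> same_component E x y"
proof
  assume "same_component E x y"
  moreover have "x \<in> \<Union>(Ms ! i)"
    using assms(10,11) by blast
  ultimately have "y \<in> \<Union>(Ms ! i)"
    by (rule same_component_stays_in_closed_set)
      (rule admissable_partition_block_closed[OF assms(6,5,1,7)])
  moreover have "y \<in> \<Union>(Ms ! j)"
    using assms(12,13) by blast
  ultimately show False
    using admissable_partition_blocks_disjoint[OF assms(6-9)] by blast
qed

end
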